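(* Let $(M,d)$ be a metric space and let $P\subseteq M$ be a finite set, enumerated as $p_0,\dots,p_n$ by a farthest point sampling with insertion radii $\lambda_0,\dots,\lambda_n$: that is, $p_0\in P$ is arbitrary, $\lambda_0=\infty$, and for each $0<k\le n$ the point $p_k\in P$ is of maximal distance to $\{p_0,\dots,p_{k-1}\}$, and this distance is $\lambda_k$. Let $\varepsilon>0$ and let $\varphi\colon\{0,\dots,n\}\to\{0,\dots,n\}$ be a function with $\varphi(0)=0$, $\varphi(k)<k$ and \[ d(p_k,p_{\varphi(k)})+(\varepsilon+1)\lambda_k/\varepsilon\le(\varepsilon+1)\lambda_{\varphi(k)}/\varepsilon \] for $k=1,\dots,n$. Let $\check{\mathcal C}$ be the relative Čech complex of $P$ in $M$, the filtered simplicial complex whose level $t\in[0,\infty]$ consists of the finite $\sigma\subseteq P$ for which there is $w\in M$ with $d(p,w)<t$ for all $p\in\sigma$. Let $S$ (the Sparse Dowker Nerve) be the filtered subcomplex of $\check{\mathcal C}$ whose level $t$ consists of the subsets $\sigma\subseteq P$ for which there exists $w\in M$ with \[ d(p_k,w)<\min\{t,(\varepsilon+1)\lambda_k/\varepsilon,(\varepsilon+1)\lambda_{\varphi(l)}/\varepsilon\} \] for all $k,l$ with $p_k,p_l\in\sigma$. Then $S$ is multiplicatively $(1,1+\varepsilon)$-interleaved with $\check{\mathcal C}$; explicitly, there are maps $f_t\colon|\check{\mathcal C}_t|\to|S_{(1+\varepsilon)t}|$ such that, writing $g_t\colon S_t\to\check{\mathcal C}_t$ for the inclusions, $f_t\circ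 g_t$ is homotopic to the inclusion $|S_t|\to|S_{(1+\varepsilon)t}|$ and $g_{(1+\varepsilon)t}\circ f_t$ is homotopic to the inclusion $|\check{\mathcal C}_t|\to|\check{\mathcal C}_{(1+\varepsilon)t}|$.
   Context: $|K|$ denotes the geometric realization of a simplicial complex $K$; maps between geometric realizations are continuous maps. Conventions: $\infty\cdot c=\infty$ for $c>0$ and $\min$ includes possibly infinite values. *)

theory Defs
  imports "HOL-Analysis.Analysis"
begin

text \<open>Geometric realization of a simplicial complex K (a set of finite vertex sets):
  barycentric-coordinate functions, as a subspace of the product topology on
  vertex-type to real. For complexes on a finite vertex set this is the usual
  realization.\<close>
definition geom_real :: "'a set set \<Rightarrow> ('a \<Rightarrow> real) set" where
  "geom_real K = {x. (\<forall>v. 0 \<le> x v) \<and>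
     (\<exists>\<sigma>\<in>K. finite \<sigma> \<and> {v. x v \<noteq> 0} \<subseteq> \<sigma> \<and> sum x \<sigma> = 1)}"

definition cech_level :: "'m set \<Rightarrow> ('m \<Rightarrow> 'm \<Rightarrow> real) \<Rightarrow> 'm set \<Rightarrow> ereal \<Rightarrow> 'm set set" where
  "cech_level M d P t = {\<sigma>. \<sigma> \<subseteq> P \<and> finite \<sigma> \<and> (\<exists>w\<in>M. \<forall>q\<in>\<sigma>. ereal (d q w) < t)}"

definition sparse_level :: "'m set \<Rightarrow> ('m \<Rightarrow> 'm \<Rightarrow> real) \<Rightarrow> nat \<Rightarrow> (nat \<Rightarrow> 'm) \<Rightarrow>
    (nat \<Rightarrow> ereal) \<Rightarrow> (nat \<Rightarrow> nat) \<Rightarrow> real \<Rightarrow> ereal \<Rightarrow> 'm set set" where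
  "sparse_level M d n p lam phi eps t = {\<sigma>. \<sigma> \<subseteq> p ` {0..n} \<and>
     (\<exists>w\<in>M. \<forall>k l. k \<le> n \<and> l \<le> n \<and> p k \<in> \<sigma> \<and> p l \<in> \<sigma> \<longrightarrow>
        ereal (d (p k) w) < min t (min (ereal ((eps + 1) / eps) * lam k)
                                       (ereal ((eps + 1) / eps) * lam (phi l))))}"

definition farthest_point_sampling ::
    "('m \<Rightarrow> 'm \<Rightarrow> real) \<Rightarrow> 'm set \<Rightarrow> nat \<Rightarrow> (nat \<Rightarrow> 'm) \<Rightarrow> (nat \<Rightarrow> ereal) \<Rightarrow> bool" where
  "farthest_point_sampling d P n p lam \<longleftrightarrow>
     bij_betw p {0..n} P \<and> lam 0 = \<infinity> \<and>
     (\<forall>k\<in>{1..n}.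
        lam k = ereal (Min ((\<lambda>i. d (p k) (p i)) ` {..<k})) \<and>
        (\<forall>q\<in>P. Min ((\<lambda>i. d q (p i)) ` {..<k}) \<le> Min ((\<lambda>i. d (p k) (p i)) ` {..<k})))"

end

theory Submission
  imports Defs
begin

text \<open>The map \<open>f\<^sub>t\<close> sends each sample point to a sample point of insertion radius at least
  \<open>\<epsilon> t\<close> within distance \<open>\<epsilon> t\<close> of it, which exists by the farthest point property. This moves
  distances to a witness by at most \<open>\<epsilon> t\<close> and lands on vertices alive at \<open>(1 + \<epsilon>) t\<close>, so
  \<open>f\<^sub>t\<close> is simplicial into the sparse nerve and contiguous to the identity in the Cech complex.
  On the sparse nerve, \<open>f\<^sub>t\<close> is joined to the inclusion by a chain of contiguous maps, each
  moving one vertex whose parent dies before \<open>(1 + \<epsilon>) t\<close> to that parent; processing the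
  vertices in the order of the death times of their parents keeps every intermediate image a
  sparse simplex for the same witness. Contiguous simplicial maps have homotopic realizations,
  by the straight-line homotopy of barycentric coordinates.\<close>

section \<open>Realizations of simplicial maps\<close>

lemma homotopic_with_linear_fun:
  fixes f g :: "'a::topological_space \<Rightarrow> 'b \<Rightarrow> real"
  assumes cf: "continuous_on S f" and cg: "continuous_on S g"
    and sub: "\<And>x s. x \<in> S \<Longrightarrow> s \<in> {0..1} \<Longrightarrow> (\<lambda>v. (1 - s) * f x v + s * g x v) \<in> T"
  shows "homotopic_with_canon (\<lambda>_. True) S T f g"
  unfolding homotopic_with_def
proof (intro exI conjI allI ballI)
  let ?h = "\<lambda>y::real \<times> 'a. \<lambda>v. (1 - fst y) * f (snd y) v + fst y * g (snd y) v"
  have "continuous_on ({0..1} \<times> S) ?h"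
  proof (intro continuous_on_coordinatewise_then_product)
    fix v
    have "continuous_on ({0..1} \<times> S) (\<lambda>y::real \<times> 'a. f (snd y) v)"
      by (rule continuous_on_compose2[OF continuous_on_product_then_coordinatewise[OF cf]
            continuous_on_snd]) auto
    moreover have "continuous_on ({0..1} \<times> S) (\<lambda>y::real \<times> 'a. g (snd y) v)"
      by (rule continuous_on_compose2[OF continuous_on_product_then_coordinatewise[OF cg]
            continuous_on_snd]) auto
    ultimately show "continuous_on ({0..1} \<times> S) (\<lambda>y. ?h y v)"
      by (intro continuous_intros)
  qed
  moreover have "?h ` ({0..1} \<times> S) \<subseteq> T"
    using sub by auto
  ultimately show
    "continuous_map (prod_topology (top_of_set {0..1}) (top_of_set S)) (top_of_set T) ?h"
    by (auto simp: Pi_iff image_subset_iff)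
qed auto

lemma geom_realE:
  assumes "x \<in> geom_real K"
  obtains \<sigma> where "\<sigma> \<in> K" "finite \<sigma>" "{v. x v \<noteq> 0} \<subseteq> \<sigma>" "sum x \<sigma> = 1" "\<forall>v. 0 \<le> x v"
  using assms unfolding geom_real_def by blast

definition geom_map :: "'a set \<Rightarrow> ('a \<Rightarrow> 'b) \<Rightarrow> ('a \<Rightarrow> real) \<Rightarrow> 'b \<Rightarrow> real" where
  "geom_map V G x = (\<lambda>v. \<Sum>u\<in>V. if G u = v then x u else 0)"

lemma continuous_on_geom_map: "finite V \<Longrightarrow> continuous_on S (geom_map V G)"
  unfolding geom_map_def
proof (intro continuous_on_coordinatewise_then_product continuous_on_sum)
  fix v u
  show "continuous_on S (\<lambda>x. if G u = v then x u else 0)"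
    by (cases "G u = v") (auto intro: continuous_on_subset[OF continuous_on_product_coordinates])
qed

lemma geom_map_apply:
  assumes "finite V" "\<sigma> \<subseteq> V" "{u. x u \<noteq> 0} \<subseteq> \<sigma>"
  shows "geom_map V G x v = sum x {u\<in>\<sigma>. G u = v}"
proof -
  have "geom_map V G x v = (\<Sum>u\<in>V. if u \<in> {u\<in>\<sigma>. G u = v} then x u else 0)"
    unfolding geom_map_def using assms(3) by (intro sum.cong) auto
  also have "\<dots> = sum x {u\<in>\<sigma>. G u = v}"
    using assms by (subst sum.inter_restrict[symmetric]) (auto intro: sum.cong)
  finally show ?thesis .
qed

lemma geom_map_coordinates:
  assumes "finite V" "\<sigma> \<subseteq> V" "{u. x u \<noteq> 0} \<subseteq> \<sigma>" "\<forall>u. 0 \<le> x u"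
  shows "\<forall>v. 0 \<le> geom_map V G x v" and "{v. geom_map V G x v \<noteq> 0} \<subseteq> G ` \<sigma>"
    and "sum (geom_map V G x) (G ` \<sigma>) = sum x \<sigma>"
proof -
  show "\<forall>v. 0 \<le> geom_map V G x v"
    using assms by (auto simp: geom_map_apply intro: sum_nonneg)
  show "{v. geom_map V G x v \<noteq> 0} \<subseteq> G ` \<sigma>"
  proof
    fix v assume "v \<in> {v. geom_map V G x v \<noteq> 0}"
    then have "sum x {u\<in>\<sigma>. G u = v} \<noteq> 0"
      using assms by (simp add: geom_map_apply)
    then show "v \<in> G ` \<sigma>"
      by (metis (mono_tags, lifting) empty_Collect_eq image_eqI sum.empty)
  qed
  have "finite \<sigma>" using assms finite_subset by blast
  then show "sum (geom_map V G x) (G ` \<sigma>) = sum x \<sigma>"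
    using assms by (simp add: geom_map_apply sum.image_gen[of \<sigma> x G])
qed

lemma homotopic_geom_map:
  assumes V: "finite V" and KV: "\<forall>\<sigma>\<in>K. \<sigma> \<subseteq> V"
    and contiguous: "\<forall>\<sigma>\<in>K. G ` \<sigma> \<union> G' ` \<sigma> \<in> L"
  shows "homotopic_with_canon (\<lambda>_. True) (geom_real K) (geom_real L) (geom_map V G) (geom_map V G')"
proof (rule homotopic_with_linear_fun[OF continuous_on_geom_map[OF V] continuous_on_geom_map[OF V]])
  fix x s assume x: "x \<in> geom_real K" and s: "s \<in> {0..(1::real)}"
  obtain \<sigma> where \<sigma>: "\<sigma> \<in> K" "finite \<sigma>" "{v. x v \<noteq> 0} \<subseteq> \<sigma>" "sum x \<sigma> = 1" "\<forall>v. 0 \<le> x v"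
    using geom_realE[OF x] by blast
  define \<rho> where "\<rho> = G ` \<sigma> \<union> G' ` \<sigma>"
  have "\<rho> \<in> L" "finite \<rho>"
    using contiguous \<sigma> by (auto simp: \<rho>_def)
  have \<sigma>V: "\<sigma> \<subseteq> V" using KV \<sigma> by auto
  note A = geom_map_coordinates[OF V \<sigma>V \<sigma>(3) \<sigma>(5), of G]
    and B = geom_map_coordinates[OF V \<sigma>V \<sigma>(3) \<sigma>(5), of G']
  have "sum (geom_map V G x) \<rho> = 1"
    using A \<sigma> \<open>finite \<rho>\<close> by (subst sum.mono_neutral_right[of \<rho> "G ` \<sigma>"]) (auto simp: \<rho>_def)
  moreover have "sum (geom_map V G' x) \<rho> = 1"
    using B \<sigma> \<open>finite \<rho>\<close> by (subst sum.mono_neutral_right[of \<rho> "G' ` \<sigma>"]) (auto simp: \<rho>_def)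
  ultimately have "(\<Sum>v\<in>\<rho>. (1 - s) * geom_map V G x v + s * geom_map V G' x v) = 1"
    by (simp add: sum.distrib sum_distrib_left[symmetric])
  moreover have "{v. (1 - s) * geom_map V G x v + s * geom_map V G' x v \<noteq> 0} \<subseteq> \<rho>"
    using A(2) B(2) by (force simp: \<rho>_def)
  moreover have "\<forall>v. 0 \<le> (1 - s) * geom_map V G x v + s * geom_map V G' x v"
    using A(1) B(1) s by auto
  ultimately show "(\<lambda>v. (1 - s) * geom_map V G x v + s * geom_map V G' x v) \<in> geom_real L"
    unfolding geom_real_def using \<open>\<rho> \<in> L\<close> \<open>finite \<rho>\<close> by blast
qed

lemma geom_map_image_subset:
  assumes "finite V" "\<forall>\<sigma>\<in>K. \<sigma> \<subseteq> V" "\<forall>\<sigma>\<in>K. G ` \<sigma> \<in> L"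
  shows "geom_map V G ` geom_real K \<subseteq> geom_real L"
  using homotopic_with_imp_subset1[OF homotopic_geom_map[OF assms(1,2), of G G L]] assms(3)
  by auto

lemma geom_map_id_on:
  assumes "finite V" "\<forall>\<sigma>\<in>K. \<sigma> \<subseteq> V" "\<And>u. u \<in> V \<Longrightarrow> G u = u" "x \<in> geom_real K"
  shows "geom_map V G x = x"
proof
  fix v
  obtain \<sigma> where "\<sigma> \<in> K" "{u. x u \<noteq> 0} \<subseteq> \<sigma>"
    using geom_realE[OF assms(4)] by blast
  then have "v \<notin> V \<Longrightarrow> x v = 0"
    using assms(2) by blast
  have "geom_map V G x v = (\<Sum>u\<in>V. if u = v then x u else 0)"
    unfolding geom_map_def using assms(3) by (intro sum.cong) auto
  also have "\<dots> = x v"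
    using assms(1) \<open>v \<notin> V \<Longrightarrow> x v = 0\<close> by (simp add: sum.delta')
  finally show "geom_map V G x v = x v" .
qed

section \<open>Collapsing sparse simplices along the parent tree\<close>

text \<open>Index-level sparse nerve: \<open>C\<close> is the death time of a vertex, \<open>phi\<close> its parent and \<open>D\<close>
  the distance of a vertex to a fixed witness.\<close>
definition sparse_simplex ::
    "(nat \<Rightarrow> ereal) \<Rightarrow> (nat \<Rightarrow> nat) \<Rightarrow> ereal \<Rightarrow> (nat \<Rightarrow> ereal) \<Rightarrow> nat set \<Rightarrow> bool" where
  "sparse_simplex C phi T D \<tau> \<longleftrightarrow> (\<forall>a\<in>\<tau>. \<forall>b\<in>\<tau>. D a < min T (min (C a) (C (phi b))))"

lemma sparse_simplex_subset:
  "sparse_simplex C phi T D \<tau> \<Longrightarrow> \<tau>' \<subseteq> \<tau> \<Longrightarrow> sparse_simplex C phi T D \<tau>'"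
  unfolding sparse_simplex_def by blast

lemma sparse_simplex_mono:
  "sparse_simplex C phi T D \<tau> \<Longrightarrow> T \<le> T' \<Longrightarrow> sparse_simplex C phi T' D \<tau>"
  unfolding sparse_simplex_def by (meson min_less_iff_conj order_less_le_trans)

lemma sparse_simplex_settled:
  assumes "\<And>a. a \<in> \<tau> \<Longrightarrow> D a < T \<and> D a < C a \<and> T \<le> C (phi a)"
  shows "sparse_simplex C phi T D \<tau>"
  using assms unfolding sparse_simplex_def by (auto dest: order.strict_trans2)

definition collapse_step :: "(nat \<Rightarrow> ereal) \<Rightarrow> (nat \<Rightarrow> nat) \<Rightarrow> ereal \<Rightarrow> nat \<Rightarrow> nat \<Rightarrow> nat" where
  "collapse_step C phi T v j = (if j = v \<and> C (phi v) < T then phi v else j)"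

definition collapse_seq :: "(nat \<Rightarrow> ereal) \<Rightarrow> (nat \<Rightarrow> nat) \<Rightarrow> ereal \<Rightarrow> nat list \<Rightarrow> nat \<Rightarrow> nat" where
  "collapse_seq C phi T vs = foldl (\<lambda>h v. collapse_step C phi T v \<circ> h) id vs"

lemma collapse_seq_Nil [simp]: "collapse_seq C phi T [] = id"
  by (simp add: collapse_seq_def)

lemma collapse_seq_snoc [simp]:
  "collapse_seq C phi T (vs @ [v]) = collapse_step C phi T v \<circ> collapse_seq C phi T vs"
  by (simp add: collapse_seq_def)

text \<open>Orders vertices by increasing \<open>C (phi b)\<close>, ties by decreasing index, so that a
  vertex comes before its parent.\<close>
definition collapse_key :: "(nat \<Rightarrow> ereal) \<Rightarrow> (nat \<Rightarrow> nat) \<Rightarrow> nat \<Rightarrow> nat \<Rightarrow> nat" where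
  "collapse_key C phi n b = card {a. a \<le> n \<and> C (phi a) < C (phi b)} * (n + 1) + (n - b)"

lemma inj_on_collapse_key: "inj_on (collapse_key C phi n) {..n}"
proof (rule inj_onI)
  fix a b assume ab: "a \<in> {..n}" "b \<in> {..n}" and "collapse_key C phi n a = collapse_key C phi n b"
  then have "collapse_key C phi n a mod (n + 1) = collapse_key C phi n b mod (n + 1)"
    by simp
  then have "n - a = n - b"
    unfolding collapse_key_def by (simp del: add_Suc_right)
  then show "a = b" using ab by auto
qed

lemma collapse_order_exists:
  "\<exists>L. set L = {..n} \<and> sorted_wrt (\<lambda>a b. collapse_key C phi n a < collapse_key C phi n b) L"
proof -
  interpret folding_insort_key "(\<le>)" "(<)" "{..n}" "collapse_key C phi n"
    by unfold_locales (rule inj_on_collapse_key)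
  let ?L = "linorder.sorted_key_list_of_set (\<le>) (collapse_key C phi n) {..n}"
  have "sorted_wrt (<) (map (collapse_key C phi n) ?L)"
    using sorted_key_list_of_set[of "{..n}"] by (simp add: strict_sorted_iff)
  moreover have "set ?L = {..n}"
    by simp
  ultimately show ?thesis
    by (metis sorted_wrt_map)
qed

lemma collapse_key_less:
  assumes "C (phi v) \<le> C (phi u)" "u < v" "v \<le> n"
  shows "collapse_key C phi n v < collapse_key C phi n u"
proof -
  have "{a. a \<le> n \<and> C (phi a) < C (phi v)} \<subseteq> {a. a \<le> n \<and> C (phi a) < C (phi u)}"
    using assms(1) less_le_trans by blast
  then have "card {a. a \<le> n \<and> C (phi a) < C (phi v)} \<le> card {a. a \<le> n \<and> C (phi a) < C (phi u)}"
    by (intro card_mono) auto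
  moreover have "n - v < n - u"
    using assms(2,3) by simp
  ultimately show ?thesis
    unfolding collapse_key_def by (intro add_le_less_mono mult_right_mono) auto
qed

lemma C_parent_le_of_collapse_key_le:
  assumes "b \<le> n" "collapse_key C phi n v \<le> collapse_key C phi n b"
  shows "C (phi v) \<le> C (phi b)"
proof (rule ccontr)
  assume "\<not> C (phi v) \<le> C (phi b)"
  then have "{a. a \<le> n \<and> C (phi a) < C (phi b)} \<subset> {a. a \<le> n \<and> C (phi a) < C (phi v)}"
    using assms(1) less_trans by fastforce
  then have "card {a. a \<le> n \<and> C (phi a) < C (phi b)} < card {a. a \<le> n \<and> C (phi a) < C (phi v)}"
    by (intro psubset_card_mono) auto
  then have "(card {a. a \<le> n \<and> C (phi a) < C (phi b)} + 1) * (n + 1)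
      \<le> card {a. a \<le> n \<and> C (phi a) < C (phi v)} * (n + 1)"
    by (intro mult_right_mono) auto
  then show False
    using assms unfolding collapse_key_def by (auto simp: algebra_simps)
qed

lemma C_parent_least:
  assumes settled: "\<forall>a\<in>\<tau> \<inter> X. T \<le> C (phi a)" and \<tau>: "\<tau> \<subseteq> {..n}" and dies: "C (phi v) < T"
    and order: "\<And>b. b \<le> n \<Longrightarrow> b \<in> X \<longleftrightarrow> collapse_key C phi n b < collapse_key C phi n v"
  shows "\<forall>b\<in>\<tau>. C (phi v) \<le> C (phi b)"
proof
  fix b assume "b \<in> \<tau>"
  show "C (phi v) \<le> C (phi b)"
  proof (cases "b \<in> X")
    case True
    then have "T \<le> C (phi b)" using settled \<open>b \<in> \<tau>\<close> by blast
    then show ?thesis using dies by (meson less_imp_le order.strict_trans2)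
  next
    case False
    then show ?thesis
      using order[of b] \<tau> \<open>b \<in> \<tau>\<close> C_parent_le_of_collapse_key_le[of b n C phi v]
      by (auto simp: not_less)
  qed
qed

lemma sorted_wrt_mem_prefix_iff:
  assumes "sorted_wrt (\<lambda>a b. f a < f b) (xs @ v # ys)" "b \<in> set (xs @ v # ys)"
  shows "b \<in> set xs \<longleftrightarrow> f b < (f v :: 'b :: linorder)"
  using assms by (auto simp: sorted_wrt_append dest: order.asym)

text \<open>The vertices in \<open>X\<close> have been processed; those still present have a parent alive at \<open>T\<close>.\<close>
definition collapse_inv :: "(nat \<Rightarrow> ereal) \<Rightarrow> (nat \<Rightarrow> nat) \<Rightarrow> nat \<Rightarrow> ereal \<Rightarrow> (nat \<Rightarrow> ereal) \<Rightarrow>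
    nat set \<Rightarrow> nat set \<Rightarrow> bool" where
  "collapse_inv C phi n T D X \<tau> \<longleftrightarrow>
     \<tau> \<subseteq> {..n} \<and> sparse_simplex C phi T D \<tau> \<and> (\<forall>a\<in>\<tau> \<inter> X. T \<le> C (phi a))"

locale parent_tree =
  fixes C :: "nat \<Rightarrow> ereal" and phi :: "nat \<Rightarrow> nat" and n :: nat
  assumes C_le_C_parent: "k \<le> n \<Longrightarrow> C k \<le> C (phi k)"
    and parent_less: "1 \<le> k \<Longrightarrow> k \<le> n \<Longrightarrow> phi k < k"
    and parent_0: "phi 0 = 0"
    and C_0: "C 0 = \<infinity>"
begin

lemma parent_le: "k \<le> n \<Longrightarrow> phi k \<le> n"
  using parent_less[of k] parent_0 by (cases "k = 0") auto

lemma sparse_simplex_insert_parent: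
  assumes dom: "\<And>k. k \<le> n \<Longrightarrow> D k < C k \<Longrightarrow> D (phi k) < C (phi k)"
    and \<tau>: "\<tau> \<subseteq> {..n}" "sparse_simplex C phi T D \<tau>"
    and v: "v \<in> \<tau>" "C (phi v) < T" and least: "\<forall>b\<in>\<tau>. C (phi v) \<le> C (phi b)"
  shows "sparse_simplex C phi T D (insert (phi v) \<tau>)"
  unfolding sparse_simplex_def
proof (intro ballI)
  fix a b assume a: "a \<in> insert (phi v) \<tau>" and b: "b \<in> insert (phi v) \<tau>"
  have D_\<tau>: "D c < min T (min (C c) (C (phi v)))" if "c \<in> \<tau>" for c
    using \<tau>(2) v(1) that by (simp add: sparse_simplex_def)
  have "D (phi v) < C (phi v)"
    using dom \<tau>(1) v(1) D_\<tau>[OF v(1)] by auto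
  then have "D a < T \<and> D a < C a \<and> D a < C (phi v)"
    using a D_\<tau> v(2) by (auto dest: order.strict_trans)
  moreover have "C (phi v) \<le> C (phi b)"
    using b least C_le_C_parent parent_le \<tau>(1) v(1) by auto
  ultimately show "D a < min T (min (C a) (C (phi b)))"
    by (auto dest: order.strict_trans2)
qed

lemma collapsing_parent_unprocessed:
  assumes v: "v \<le> n" and dies: "C (phi v) < T"
    and order: "\<And>b. b \<le> n \<Longrightarrow> b \<in> X \<longleftrightarrow> collapse_key C phi n b < collapse_key C phi n v"
  shows "phi v < v" and "phi v \<notin> X"
proof -
  have "v \<noteq> 0"
  proof
    assume "v = 0"
    then show False using dies C_0 parent_0 by simp
  qed
  then show "phi v < v"
    using parent_less v by simp
  then have "collapse_key C phi n v < collapse_key C phi n (phi v)"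
    using collapse_key_less[of C phi v "phi v"] C_le_C_parent[OF parent_le[OF v]] v by blast
  then show "phi v \<notin> X"
    using order[of "phi v"] parent_le v by auto
qed

lemma collapse_step_inv:
  assumes dom: "\<And>k. k \<le> n \<Longrightarrow> D k < C k \<Longrightarrow> D (phi k) < C (phi k)"
    and inv: "collapse_inv C phi n T D X \<tau>" and v: "v \<le> n"
    and order: "\<And>b. b \<le> n \<Longrightarrow> b \<in> X \<longleftrightarrow> collapse_key C phi n b < collapse_key C phi n v"
  shows "collapse_inv C phi n T D (insert v X) (collapse_step C phi T v ` \<tau>)"
    and "collapse_inv C phi n T D {} (\<tau> \<union> collapse_step C phi T v ` \<tau>)"
proof -
  have \<tau>: "\<tau> \<subseteq> {..n}" "sparse_simplex C phi T D \<tau>" and settled: "\<forall>a\<in>\<tau> \<inter> X. T \<le> C (phi a)"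
    using inv by (auto simp: collapse_inv_def)
  have "collapse_inv C phi n T D (insert v X) (collapse_step C phi T v ` \<tau>) \<and>
      collapse_inv C phi n T D {} (\<tau> \<union> collapse_step C phi T v ` \<tau>)"
  proof (cases "v \<in> \<tau> \<and> C (phi v) < T")
    case False
    then have "collapse_step C phi T v ` \<tau> = \<tau>"
      by (auto simp: collapse_step_def)
    then show ?thesis
      using False \<tau> settled by (auto simp: collapse_inv_def not_less)
  next
    case True
    then have dies: "C (phi v) < T" by simp
    note parent = collapsing_parent_unprocessed[OF v dies order]
    have sparse: "sparse_simplex C phi T D (insert (phi v) \<tau>)"
      using sparse_simplex_insert_parent[OF dom \<tau>] True
        C_parent_least[OF settled \<tau>(1) dies order] by blast
    have image: "collapse_step C phi T v ` \<tau> \<subseteq> insert (phi v) (\<tau> - {v})"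
      using dies by (auto simp: collapse_step_def)
    have "insert (phi v) \<tau> \<subseteq> {..n}"
      using \<tau>(1) parent_le v by auto
    moreover have "\<forall>a\<in>collapse_step C phi T v ` \<tau> \<inter> insert v X. T \<le> C (phi a)"
      using image settled parent by fastforce
    ultimately show ?thesis
      using sparse_simplex_subset[OF sparse] image unfolding collapse_inv_def by blast
  qed
  then show "collapse_inv C phi n T D (insert v X) (collapse_step C phi T v ` \<tau>)"
    and "collapse_inv C phi n T D {} (\<tau> \<union> collapse_step C phi T v ` \<tau>)"
    by blast+
qed

lemma collapse_seq_inv:
  assumes dom: "\<And>k. k \<le> n \<Longrightarrow> D k < C k \<Longrightarrow> D (phi k) < C (phi k)"
    and L: "set L = {..n}" "sorted_wrt (\<lambda>a b. collapse_key C phi n a < collapse_key C phi n b) L"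
    and J: "collapse_inv C phi n T D {} J"
  shows "L = xs @ ys \<Longrightarrow> collapse_inv C phi n T D (set xs) (collapse_seq C phi T xs ` J)"
proof (induction xs arbitrary: ys rule: rev_induct)
  case Nil
  then show ?case using J by simp
next
  case (snoc v xs)
  then have L_split: "L = xs @ v # ys" and "v \<le> n"
    using L(1) by auto
  have "collapse_inv C phi n T D (insert v (set xs))
      (collapse_step C phi T v ` collapse_seq C phi T xs ` J)"
  proof (rule collapse_step_inv(1)[OF dom snoc.IH[OF L_split] \<open>v \<le> n\<close>])
    show "b \<in> set xs \<longleftrightarrow> collapse_key C phi n b < collapse_key C phi n v" if "b \<le> n" for b
      using sorted_wrt_mem_prefix_iff[of _ xs v ys b] L that L_split by auto
  qed
  then show ?case by (simp add: image_comp)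
qed

lemma collapse_seq_contiguous:
  assumes dom: "\<And>k. k \<le> n \<Longrightarrow> D k < C k \<Longrightarrow> D (phi k) < C (phi k)"
    and L: "set L = {..n}" "sorted_wrt (\<lambda>a b. collapse_key C phi n a < collapse_key C phi n b) L"
    and J: "collapse_inv C phi n T D {} J"
    and L_split: "L = xs @ v # ys"
  shows "collapse_inv C phi n T D {}
    (collapse_seq C phi T xs ` J \<union> collapse_seq C phi T (xs @ [v]) ` J)"
proof -
  have "v \<le> n" using L(1) L_split by auto
  have "collapse_inv C phi n T D {}
      (collapse_seq C phi T xs ` J \<union> collapse_step C phi T v ` collapse_seq C phi T xs ` J)"
  proof (rule collapse_step_inv(2)[OF dom collapse_seq_inv[OF dom L J] \<open>v \<le> n\<close>])
    show "L = xs @ v # ys" by (rule L_split)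
    show "b \<in> set xs \<longleftrightarrow> collapse_key C phi n b < collapse_key C phi n v" if "b \<le> n" for b
      using sorted_wrt_mem_prefix_iff[of _ xs v ys b] L that L_split by auto
  qed
  then show ?thesis by (simp add: image_comp)
qed

end

section \<open>Sparse Dowker nerves of farthest point samplings\<close>

definition death_time :: "real \<Rightarrow> (nat \<Rightarrow> ereal) \<Rightarrow> nat \<Rightarrow> ereal" where
  "death_time eps lam k = ereal ((eps + 1) / eps) * lam k"

locale sparse_dowker = Metric_space M d
  for M :: "'m set" and d :: "'m \<Rightarrow> 'm \<Rightarrow> real" +
  fixes P :: "'m set" and n :: nat and p :: "nat \<Rightarrow> 'm" and lam :: "nat \<Rightarrow> ereal"
    and eps :: real and phi :: "nat \<Rightarrow> nat"
  assumes P_subset: "P \<subseteq> M" and finite_P: "finite P"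
    and sampling: "farthest_point_sampling d P n p lam"
    and eps_pos: "eps > 0"
    and phi_0: "phi 0 = 0"
    and parent_cond: "\<forall>k\<in>{1..n}. phi k < k \<and>
           ereal (d (p k) (p (phi k))) + ereal ((eps + 1) / eps) * lam k
             \<le> ereal ((eps + 1) / eps) * lam (phi k)"
begin

abbreviation dist_to :: "'m \<Rightarrow> nat \<Rightarrow> ereal" where
  "dist_to w k \<equiv> ereal (d (p k) w)"

abbreviation cech :: "ereal \<Rightarrow> 'm set set" where
  "cech \<equiv> cech_level M d P"

abbreviation sparse :: "ereal \<Rightarrow> 'm set set" where
  "sparse \<equiv> sparse_level M d n p lam phi eps"

lemma bij_p: "bij_betw p {..n} P"
  using sampling by (simp add: farthest_point_sampling_def atLeast0AtMost)

lemma lam_0: "lam 0 = \<infinity>"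
  using sampling by (simp add: farthest_point_sampling_def)

lemma p_in_P: "k \<le> n \<Longrightarrow> p k \<in> P"
  using bij_p bij_betwE by fastforce

lemma p_in_M: "k \<le> n \<Longrightarrow> p k \<in> M"
  using p_in_P P_subset by blast

lemma parent_dist:
  assumes "1 \<le> k" "k \<le> n"
  shows "phi k < k"
    and "ereal (d (p k) (p (phi k))) + death_time eps lam k \<le> death_time eps lam (phi k)"
  using parent_cond assms by (auto simp: death_time_def)

sublocale tree: parent_tree "death_time eps lam" phi n
proof
  fix k assume k: "k \<le> n"
  show "death_time eps lam k \<le> death_time eps lam (phi k)"
  proof (cases "k = 0")
    case True
    then show ?thesis using phi_0 by simp
  next
    case False
    have "death_time eps lam k \<le> ereal (d (p k) (p (phi k))) + death_time eps lam k"
      by (simp add: add_increasing)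
    also have "\<dots> \<le> death_time eps lam (phi k)"
      using parent_dist(2) False k by simp
    finally show ?thesis .
  qed
next
  show "\<And>k. 1 \<le> k \<Longrightarrow> k \<le> n \<Longrightarrow> phi k < k"
    by (rule parent_dist(1))
  show "phi 0 = 0"
    by (rule phi_0)
  show "death_time eps lam 0 = \<infinity>"
    using eps_pos lam_0 by (simp add: death_time_def)
qed

lemma death_time_dominated:
  assumes w: "w \<in> M" and k: "k \<le> n" and alive: "dist_to w k < death_time eps lam k"
  shows "dist_to w (phi k) < death_time eps lam (phi k)"
proof (cases "k = 0")
  case True
  then show ?thesis using alive phi_0 by simp
next
  case False
  have "d (p (phi k)) w \<le> d (p k) (p (phi k)) + d (p k) w"
    using triangle'' p_in_M tree.parent_le w k by blast
  then have "dist_to w (phi k) \<le> ereal (d (p k) (p (phi k))) + dist_to w k"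
    by simp
  also have "\<dots> < ereal (d (p k) (p (phi k))) + death_time eps lam k"
    using alive by (intro ereal_less_add) auto
  also have "\<dots> \<le> death_time eps lam (phi k)"
    using parent_dist(2) False k by simp
  finally show ?thesis .
qed

text \<open>Take the least \<open>m\<close> with \<open>lam m < r\<close>: the points before \<open>p m\<close> have radius at least \<open>r\<close>,
  and \<open>p m\<close> being farthest from them, \<open>p k\<close> lies within \<open>lam m\<close> of one of them.\<close>
lemma exists_net_point:
  assumes k: "k \<le> n" and small: "\<not> r \<le> lam k"
  shows "\<exists>i\<le>n. r \<le> lam i \<and> ereal (d (p k) (p i)) < r"
proof -
  define m where "m = (LEAST j. \<not> r \<le> lam j)"
  have "m \<le> k"
    unfolding m_def using small by (rule Least_le)
  have "\<not> r \<le> lam m"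
    unfolding m_def using small by (rule LeastI)
  have "m \<noteq> 0"
  proof
    assume "m = 0"
    then show False using \<open>\<not> r \<le> lam m\<close> lam_0 by simp
  qed
  have before: "r \<le> lam j" if "j < m" for j
    using not_less_Least[of j] that unfolding m_def by blast
  have "m \<in> {1..n}"
    using \<open>m \<noteq> 0\<close> \<open>m \<le> k\<close> k by auto
  then have radius: "lam m = ereal (Min ((\<lambda>i. d (p m) (p i)) ` {..<m}))"
    and farthest: "Min ((\<lambda>i. d (p k) (p i)) ` {..<m}) \<le> Min ((\<lambda>i. d (p m) (p i)) ` {..<m})"
    using sampling p_in_P[OF k] unfolding farthest_point_sampling_def by blast+
  obtain i where i: "i < m" "d (p k) (p i) = Min ((\<lambda>i. d (p k) (p i)) ` {..<m})"
  proof -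
    have nonempty: "(\<lambda>i. d (p k) (p i)) ` {..<m} \<noteq> {}"
      using \<open>m \<noteq> 0\<close> by auto
    show thesis
      using that Min_in[OF _ nonempty] by auto
  qed
  have "ereal (d (p k) (p i)) \<le> lam m"
    using i(2) radius farthest by simp
  also have "\<dots> < r"
    using \<open>\<not> r \<le> lam m\<close> by simp
  finally show ?thesis
    using i(1) before \<open>m \<le> k\<close> k by (intro exI[of _ i]) auto
qed

definition net :: "ereal \<Rightarrow> nat \<Rightarrow> nat" where
  "net r k = (if r \<le> lam k then k else SOME i. i \<le> n \<and> r \<le> lam i \<and> ereal (d (p k) (p i)) < r)"

lemma net_spec:
  assumes "k \<le> n" "0 \<le> r"
  shows "net r k \<le> n \<and> r \<le> lam (net r k) \<and> ereal (d (p k) (p (net r k))) \<le> r"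
proof (cases "r \<le> lam k")
  case True
  then show ?thesis
    using assms p_in_M by (simp add: net_def zero_ereal_def[symmetric])
next
  case False
  then show ?thesis
    using someI_ex[OF exists_net_point[OF assms(1) False]] by (simp add: net_def less_imp_le)
qed

lemma level_le: "0 \<le> t \<Longrightarrow> t \<le> ereal (1 + eps) * t"
  using eps_pos by (cases t) (auto simp: distrib_right)

lemma death_time_net:
  assumes "k \<le> n" "0 \<le> t"
  shows "ereal (1 + eps) * t \<le> death_time eps lam (net (ereal eps * t) k)"
proof -
  have "(eps + 1) / eps * eps = 1 + eps"
    using eps_pos by simp
  then have "ereal (1 + eps) * t = ereal ((eps + 1) / eps) * (ereal eps * t)"
    by (metis mult.assoc times_ereal.simps(1))
  also have "\<dots> \<le> death_time eps lam (net (ereal eps * t) k)"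
    unfolding death_time_def using net_spec[of k "ereal eps * t"] assms eps_pos
    by (intro ereal_mult_left_mono) auto
  finally show ?thesis .
qed

lemma dist_net_less:
  assumes k: "k \<le> n" and t: "0 \<le> t" and w: "w \<in> M" and close: "dist_to w k < t"
  shows "dist_to w (net (ereal eps * t) k) < ereal (1 + eps) * t"
proof -
  let ?i = "net (ereal eps * t) k"
  have i: "?i \<le> n" "ereal (d (p k) (p ?i)) \<le> ereal eps * t"
    using net_spec[of k "ereal eps * t"] k t eps_pos by auto
  have "d (p ?i) w \<le> d (p k) (p ?i) + d (p k) w"
    using triangle'' p_in_M i(1) k w by blast
  moreover have "ereal (d (p k) (p ?i) + d (p k) w) < ereal (1 + eps) * t"
    using i(2) close t by (cases t) (auto simp: algebra_simps)
  ultimately show ?thesis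
    by (meson ereal_less_eq(3) order.strict_trans1)
qed

definition idx :: "'m \<Rightarrow> nat" where
  "idx u = inv_into {..n} p u"

definition vertex_map :: "(nat \<Rightarrow> nat) \<Rightarrow> 'm \<Rightarrow> 'm" where
  "vertex_map \<pi> u = p (\<pi> (idx u))"

lemma idx_le: "u \<in> P \<Longrightarrow> idx u \<le> n"
  using bij_p unfolding idx_def bij_betw_def by (metis atMost_iff inv_into_into)

lemma p_idx: "u \<in> P \<Longrightarrow> p (idx u) = u"
  using bij_p unfolding idx_def bij_betw_def by (simp add: f_inv_into_f)

lemma idx_p: "k \<le> n \<Longrightarrow> idx (p k) = k"
  using bij_p unfolding idx_def bij_betw_def by (simp add: inv_into_f_f)

lemma cech_level_subset: "\<forall>\<sigma>\<in>cech s. \<sigma> \<subseteq> P"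
  by (auto simp: cech_level_def)

lemma sparse_level_subset: "\<forall>\<sigma>\<in>sparse s. \<sigma> \<subseteq> P"
  using bij_p by (auto simp: sparse_level_def bij_betw_def atLeast0AtMost)

lemma cech_levelE:
  assumes "\<sigma> \<in> cech s"
  obtains w where "\<sigma> \<subseteq> P" "w \<in> M" "\<forall>a\<in>idx ` \<sigma>. dist_to w a < s"
  using assms p_idx unfolding cech_level_def by fastforce

lemma p_image_in_cech_level:
  assumes "J \<subseteq> {..n}" "w \<in> M" "\<forall>a\<in>J. dist_to w a < s"
  shows "p ` J \<in> cech s"
  using assms p_in_P finite_subset[OF assms(1)] unfolding cech_level_def by blast

lemma sparse_levelE:
  assumes "\<sigma> \<in> sparse s"
  obtains w where "\<sigma> \<subseteq> P" "w \<in> M"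
    "sparse_simplex (death_time eps lam) phi s (dist_to w) (idx ` \<sigma>)"
proof -
  have "\<sigma> \<subseteq> P"
    using assms sparse_level_subset by blast
  moreover obtain w where "w \<in> M" and close: "\<forall>k l. k \<le> n \<and> l \<le> n \<and> p k \<in> \<sigma> \<and> p l \<in> \<sigma> \<longrightarrow>
      dist_to w k < min s (min (death_time eps lam k) (death_time eps lam (phi l)))"
    using assms unfolding sparse_level_def death_time_def by blast
  moreover have "sparse_simplex (death_time eps lam) phi s (dist_to w) (idx ` \<sigma>)"
    unfolding sparse_simplex_def
  proof (intro ballI)
    fix a b assume "a \<in> idx ` \<sigma>" "b \<in> idx ` \<sigma>"
    then have "a \<le> n \<and> p a \<in> \<sigma>" "b \<le> n \<and> p b \<in> \<sigma>"
      using \<open>\<sigma> \<subseteq> P\<close> idx_le p_idx by auto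
    then show "dist_to w a < min s (min (death_time eps lam a) (death_time eps lam (phi b)))"
      using close by blast
  qed
  ultimately show thesis using that by blast
qed

lemma p_image_in_sparse_level:
  assumes "J \<subseteq> {..n}" "w \<in> M" "sparse_simplex (death_time eps lam) phi s (dist_to w) J"
  shows "p ` J \<in> sparse s"
  unfolding sparse_level_def
proof (intro CollectI conjI bexI[OF _ assms(2)] allI impI)
  show "p ` J \<subseteq> p ` {0..n}"
    using assms(1) by (auto simp: atLeast0AtMost)
next
  fix k l assume "k \<le> n \<and> l \<le> n \<and> p k \<in> p ` J \<and> p l \<in> p ` J"
  then have "k \<in> J" "l \<in> J"
    using assms(1) idx_p by (metis image_iff subsetD atMost_iff)+
  then show "dist_to w k < min s (min (ereal ((eps + 1) / eps) * lam k)
      (ereal ((eps + 1) / eps) * lam (phi l)))"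
    using assms(3) by (simp add: sparse_simplex_def death_time_def)
qed

lemma homotopic_vertex_maps:
  assumes "\<forall>\<sigma>\<in>K. \<sigma> \<subseteq> P" and "\<And>\<sigma>. \<sigma> \<in> K \<Longrightarrow> p ` (\<pi> ` idx ` \<sigma> \<union> \<pi>' ` idx ` \<sigma>) \<in> L"
  shows "homotopic_with_canon (\<lambda>_. True) (geom_real K) (geom_real L)
    (geom_map P (vertex_map \<pi>)) (geom_map P (vertex_map \<pi>'))"
  using assms
  by (intro homotopic_geom_map[OF finite_P]) (auto simp: vertex_map_def image_Un image_image)

lemma geom_map_vertex_map_id:
  "\<forall>\<sigma>\<in>K. \<sigma> \<subseteq> P \<Longrightarrow> x \<in> geom_real K \<Longrightarrow> geom_map P (vertex_map id) x = x"
  by (rule geom_map_id_on[OF finite_P]) (auto simp: vertex_map_def p_idx)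

definition interleaving_map :: "ereal \<Rightarrow> ('m \<Rightarrow> real) \<Rightarrow> 'm \<Rightarrow> real" where
  "interleaving_map t = geom_map P (vertex_map (net (ereal eps * t)))"

lemma net_image_alive:
  assumes t: "0 \<le> t" and J: "J \<subseteq> {..n}" and w: "w \<in> M"
    and close: "\<forall>a\<in>J. dist_to w a < t"
  shows "net (ereal eps * t) ` J \<subseteq> {..n}"
    and "\<forall>a\<in>net (ereal eps * t) ` J. dist_to w a < ereal (1 + eps) * t \<and>
      dist_to w a < death_time eps lam a \<and> ereal (1 + eps) * t \<le> death_time eps lam (phi a)"
proof -
  have "0 \<le> ereal eps * t"
    using t eps_pos by simp
  then show "net (ereal eps * t) ` J \<subseteq> {..n}"
    using net_spec J by auto
  show "\<forall>a\<in>net (ereal eps * t) ` J. dist_to w a < ereal (1 + eps) * t \<and>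
      dist_to w a < death_time eps lam a \<and> ereal (1 + eps) * t \<le> death_time eps lam (phi a)"
  proof
    fix a assume "a \<in> net (ereal eps * t) ` J"
    then obtain k where k: "k \<in> J" "a = net (ereal eps * t) k"
      by blast
    have "a \<le> n"
      using net_spec J k \<open>0 \<le> ereal eps * t\<close> by auto
    have "dist_to w a < ereal (1 + eps) * t"
      using dist_net_less J k t w close by auto
    moreover have "ereal (1 + eps) * t \<le> death_time eps lam a"
      using death_time_net J k t by auto
    moreover have "death_time eps lam a \<le> death_time eps lam (phi a)"
      using tree.C_le_C_parent \<open>a \<le> n\<close> .
    ultimately show "dist_to w a < ereal (1 + eps) * t \<and>
        dist_to w a < death_time eps lam a \<and> ereal (1 + eps) * t \<le> death_time eps lam (phi a)"
      by (auto dest: order.strict_trans2 order.trans)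
  qed
qed

lemma continuous_on_interleaving_map: "continuous_on S (interleaving_map t)"
  unfolding interleaving_map_def by (rule continuous_on_geom_map[OF finite_P])

lemma interleaving_map_image:
  assumes t: "0 \<le> t"
  shows "interleaving_map t ` geom_real (cech t) \<subseteq> geom_real (sparse (ereal (1 + eps) * t))"
  unfolding interleaving_map_def
proof (intro geom_map_image_subset[OF finite_P] cech_level_subset ballI)
  fix \<sigma> assume "\<sigma> \<in> cech t"
  then obtain w where "\<sigma> \<subseteq> P" "w \<in> M" "\<forall>a\<in>idx ` \<sigma>. dist_to w a < t"
    by (rule cech_levelE)
  moreover have "idx ` \<sigma> \<subseteq> {..n}"
    using \<open>\<sigma> \<subseteq> P\<close> idx_le by auto
  ultimately have "p ` net (ereal eps * t) ` idx ` \<sigma> \<in> sparse (ereal (1 + eps) * t)"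
    using net_image_alive[OF t \<open>idx ` \<sigma> \<subseteq> {..n}\<close> \<open>w \<in> M\<close>]
    by (auto intro!: p_image_in_sparse_level sparse_simplex_settled)
  then show "vertex_map (net (ereal eps * t)) ` \<sigma> \<in> sparse (ereal (1 + eps) * t)"
    by (simp add: vertex_map_def image_image)
qed

lemma interleaving_map_homotopic_cech:
  assumes t: "0 \<le> t"
  shows "homotopic_with_canon (\<lambda>_. True) (geom_real (cech t))
    (geom_real (cech (ereal (1 + eps) * t))) (interleaving_map t) id"
proof -
  have "homotopic_with_canon (\<lambda>_. True) (geom_real (cech t))
      (geom_real (cech (ereal (1 + eps) * t)))
      (interleaving_map t) (geom_map P (vertex_map id))"
    unfolding interleaving_map_def
  proof (rule homotopic_vertex_maps[OF cech_level_subset])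
    fix \<sigma> assume "\<sigma> \<in> cech t"
    then obtain w where "\<sigma> \<subseteq> P" "w \<in> M" and close: "\<forall>a\<in>idx ` \<sigma>. dist_to w a < t"
      by (rule cech_levelE)
    moreover have J: "idx ` \<sigma> \<subseteq> {..n}"
      using \<open>\<sigma> \<subseteq> P\<close> idx_le by auto
    moreover have "\<forall>a\<in>idx ` \<sigma>. dist_to w a < ereal (1 + eps) * t"
      using close level_le[OF t] by (auto dest: order.strict_trans2)
    ultimately show "p ` (net (ereal eps * t) ` idx ` \<sigma> \<union> id ` idx ` \<sigma>)
        \<in> cech (ereal (1 + eps) * t)"
      using net_image_alive[OF t J \<open>w \<in> M\<close>] by (intro p_image_in_cech_level) auto
  qed
  then show ?thesis
    by (rule homotopic_with_eq) (auto simp: geom_map_vertex_map_id[OF cech_level_subset])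
qed

lemma sparse_level_collapse_inv:
  assumes "\<sigma> \<in> sparse t" "0 \<le> t"
  obtains w where "\<sigma> \<subseteq> P" "w \<in> M" "\<forall>a\<in>idx ` \<sigma>. dist_to w a < t"
    "collapse_inv (death_time eps lam) phi n (ereal (1 + eps) * t) (dist_to w) {} (idx ` \<sigma>)"
proof -
  obtain w where "\<sigma> \<subseteq> P" "w \<in> M"
    and sparse: "sparse_simplex (death_time eps lam) phi t (dist_to w) (idx ` \<sigma>)"
    using assms(1) by (rule sparse_levelE)
  moreover have "\<forall>a\<in>idx ` \<sigma>. dist_to w a < t"
    using sparse by (auto simp: sparse_simplex_def)
  moreover have "idx ` \<sigma> \<subseteq> {..n}"
    using \<open>\<sigma> \<subseteq> P\<close> idx_le by auto
  ultimately show thesis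
    using that sparse_simplex_mono[OF sparse level_le[OF assms(2)]] by (auto simp: collapse_inv_def)
qed

lemma homotopic_collapse_seq:
  assumes t: "0 \<le> t" and L: "set L = {..n}"
      "sorted_wrt (\<lambda>a b. collapse_key (death_time eps lam) phi n a
        < collapse_key (death_time eps lam) phi n b) L"
  shows "L = xs @ ys \<Longrightarrow> homotopic_with_canon (\<lambda>_. True) (geom_real (sparse t))
    (geom_real (sparse (ereal (1 + eps) * t)))
    (geom_map P (vertex_map id))
    (geom_map P (vertex_map (collapse_seq (death_time eps lam) phi (ereal (1 + eps) * t) xs)))"
proof (induction xs arbitrary: ys rule: rev_induct)
  case Nil
  show ?case
    unfolding collapse_seq_Nil
  proof (rule homotopic_vertex_maps[OF sparse_level_subset])
    fix \<sigma> assume "\<sigma> \<in> sparse t"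
    then obtain w where "w \<in> M" and "collapse_inv (death_time eps lam) phi n (ereal (1 + eps) * t)
        (dist_to w) {} (idx ` \<sigma>)"
      using t by (rule sparse_level_collapse_inv)
    then show "p ` (id ` idx ` \<sigma> \<union> id ` idx ` \<sigma>) \<in> sparse (ereal (1 + eps) * t)"
      unfolding collapse_inv_def by (simp add: p_image_in_sparse_level)
  qed
next
  case (snoc v xs)
  let ?seq = "collapse_seq (death_time eps lam) phi (ereal (1 + eps) * t)"
  have "homotopic_with_canon (\<lambda>_. True) (geom_real (sparse t))
    (geom_real (sparse (ereal (1 + eps) * t)))
    (geom_map P (vertex_map (?seq xs))) (geom_map P (vertex_map (?seq (xs @ [v]))))"
  proof (rule homotopic_vertex_maps[OF sparse_level_subset])
    fix \<sigma> assume "\<sigma> \<in> sparse t"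
    then obtain w where "w \<in> M"
      and inv: "collapse_inv (death_time eps lam) phi n (ereal (1 + eps) * t) (dist_to w) {} (idx ` \<sigma>)"
      using t by (rule sparse_level_collapse_inv)
    have "collapse_inv (death_time eps lam) phi n (ereal (1 + eps) * t) (dist_to w) {}
        (?seq xs ` idx ` \<sigma> \<union> ?seq (xs @ [v]) ` idx ` \<sigma>)"
      using tree.collapse_seq_contiguous[OF death_time_dominated[OF \<open>w \<in> M\<close>] L inv] snoc.prems
      by simp
    then show "p ` (?seq xs ` idx ` \<sigma> \<union> ?seq (xs @ [v]) ` idx ` \<sigma>)
        \<in> sparse (ereal (1 + eps) * t)"
      using \<open>w \<in> M\<close> unfolding collapse_inv_def by (intro p_image_in_sparse_level) auto
  qed
  moreover have "L = xs @ v # ys"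
    using snoc.prems by simp
  ultimately show ?case
    using homotopic_with_trans snoc.IH by blast
qed

lemma interleaving_map_homotopic_sparse:
  assumes t: "0 \<le> t"
  shows "homotopic_with_canon (\<lambda>_. True) (geom_real (sparse t))
    (geom_real (sparse (ereal (1 + eps) * t))) (interleaving_map t) id"
proof -
  let ?T = "ereal (1 + eps) * t"
  let ?seq = "collapse_seq (death_time eps lam) phi ?T"
  obtain L where L: "set L = {..n}"
    "sorted_wrt (\<lambda>a b. collapse_key (death_time eps lam) phi n a
      < collapse_key (death_time eps lam) phi n b) L"
    using collapse_order_exists by blast
  have "homotopic_with_canon (\<lambda>_. True) (geom_real (sparse t))
      (geom_real (sparse ?T)) (geom_map P (vertex_map (?seq L))) (interleaving_map t)"
    unfolding interleaving_map_def
  proof (rule homotopic_vertex_maps[OF sparse_level_subset])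
    fix \<sigma> assume "\<sigma> \<in> sparse t"
    then obtain w where w: "w \<in> M" and close: "\<forall>a\<in>idx ` \<sigma>. dist_to w a < t"
      and inv: "collapse_inv (death_time eps lam) phi n ?T (dist_to w) {} (idx ` \<sigma>)"
      using t by (rule sparse_level_collapse_inv)
    have J: "idx ` \<sigma> \<subseteq> {..n}"
      using inv by (simp add: collapse_inv_def)
    have "collapse_inv (death_time eps lam) phi n ?T (dist_to w) (set L) (?seq L ` idx ` \<sigma>)"
      using tree.collapse_seq_inv[OF death_time_dominated[OF w] L inv, of L "[]"] by simp
    then have "?seq L ` idx ` \<sigma> \<subseteq> {..n}"
      and sparse: "sparse_simplex (death_time eps lam) phi ?T (dist_to w) (?seq L ` idx ` \<sigma>)"
      and settled: "\<forall>a\<in>?seq L ` idx ` \<sigma>. ?T \<le> death_time eps lam (phi a)"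
      unfolding collapse_inv_def L(1) by blast+
    moreover have "\<forall>a\<in>?seq L ` idx ` \<sigma>. dist_to w a < ?T \<and> dist_to w a < death_time eps lam a"
      using sparse by (simp add: sparse_simplex_def)
    ultimately show "p ` (?seq L ` idx ` \<sigma> \<union> net (ereal eps * t) ` idx ` \<sigma>) \<in> sparse ?T"
      using net_image_alive[OF t J w close] w
      by (intro p_image_in_sparse_level sparse_simplex_settled) auto
  qed
  then have "homotopic_with_canon (\<lambda>_. True) (geom_real (sparse t))
      (geom_real (sparse ?T)) (geom_map P (vertex_map id)) (interleaving_map t)"
    using homotopic_with_trans homotopic_collapse_seq[OF t L, of L "[]"] by blast
  then show ?thesis
    by (rule homotopic_with_eq[OF homotopic_with_symD])
      (auto simp: geom_map_vertex_map_id[OF sparse_level_subset])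
qed

end

theorem theorem1p1:
  fixes M :: "'m set" and d :: "'m \<Rightarrow> 'm \<Rightarrow> real" and P :: "'m set"
    and n :: nat and p :: "nat \<Rightarrow> 'm" and lam :: "nat \<Rightarrow> ereal"
    and eps :: real and phi :: "nat \<Rightarrow> nat"
  assumes "Metric_space M d"
    and "P \<subseteq> M" and "finite P"
    and "farthest_point_sampling d P n p lam"
    and "eps > 0"
    and "phi 0 = 0"
    and "\<forall>k\<in>{1..n}. phi k < k \<and>
           ereal (d (p k) (p (phi k))) + ereal ((eps + 1) / eps) * lam k
             \<le> ereal ((eps + 1) / eps) * lam (phi k)"
  shows "\<forall>t::ereal. 0 \<le> t \<longrightarrow>
    (\<exists>f. continuous_on (geom_real (cech_level M d P t)) f \<and>
         f ` geom_real (cech_level M d P t)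
           \<subseteq> geom_real (sparse_level M d n p lam phi eps (ereal (1 + eps) * t)) \<and>
         homotopic_with_canon (\<lambda>_. True)
           (geom_real (sparse_level M d n p lam phi eps t))
           (geom_real (sparse_level M d n p lam phi eps (ereal (1 + eps) * t))) f id \<and>
         homotopic_with_canon (\<lambda>_. True)
           (geom_real (cech_level M d P t))
           (geom_real (cech_level M d P (ereal (1 + eps) * t))) f id)"
proof -
  interpret sparse_dowker M d P n p lam eps phi
    using assms by (simp add: sparse_dowker_def sparse_dowker_axioms_def)
  show ?thesis
    using continuous_on_interleaving_map interleaving_map_image
      interleaving_map_homotopic_sparse interleaving_map_homotopic_cech by blast
qed

end
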